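(* Let $s\in GL(\infty,F_2)$ be the permutation matrix exchanging the basis vectors $e_1$ and $e_2$ and fixing all $e_j$, $j\ge3$. For every $g\in GL(\infty,F_2)\setminus\{I\}$ there exist $k\in\mathbb N$ and $s_1,\dots,s_k\in GL(\infty,F_2)$ such that each $s_i$ is conjugate to $s$ in $GL(\infty,F_2)$, $s_1s_2\cdots s_k=g$, and $$R(s_1-I)+R(s_2-I)+\dots+R(s_k-I)=R(g-I),$$ where $R(h-I)\subseteq F_2^\infty$ denotes the range of $h-I$.
   Context: $F_2$ is the field with two elements and $F_2^\infty=\bigoplus_{\mathbb N}F_2$ is the space of finitely supported column vectors with standard basis $e_1,e_2,\dots$. $GL(\infty,F_2)$ is the group of invertible $\mathbb N\times\mathbb N$ matrices $M$ over $F_2$ with $M_{ij}\neq\delta_{ij}$ for only finitely many $(i,j)$, acting on $F_2^\infty$ by matrix multiplication; $I$ is the identity matrix. *)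

theory Defs
  imports Main "HOL-Library.Z2"
begin

text \<open>F_2 is the type bit (a field). Vectors are functions nat => bit, matrices nat => nat => bit.
  The basis vectors e_1, e_2, ... are indexed by 0, 1, ... (0-based).\<close>

type_synonym vec = "nat \<Rightarrow> bit"
type_synonym mat = "nat \<Rightarrow> nat \<Rightarrow> bit"

definition idm :: mat where
  "idm = (\<lambda>i j. if i = j then 1 else 0)"

definition finsupp :: "vec \<Rightarrow> bool" where
  "finsupp v \<longleftrightarrow> finite {i. v i \<noteq> 0}"

definition finitary :: "mat \<Rightarrow> bool" where
  "finitary M \<longleftrightarrow> finite {(i, j). M i j \<noteq> idm i j}"

text \<open>Matrix product; the sum ranges over the (finite, for finitary matrices) set of
  indices with nonzero summand.\<close>
definition mmult :: "mat \<Rightarrow> mat \<Rightarrow> mat" where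
  "mmult M N = (\<lambda>i j. \<Sum>k\<in>{k. M i k \<noteq> 0 \<and> N k j \<noteq> 0}. M i k * N k j)"

definition mvmult :: "mat \<Rightarrow> vec \<Rightarrow> vec" where
  "mvmult M v = (\<lambda>i. \<Sum>k\<in>{k. M i k \<noteq> 0 \<and> v k \<noteq> 0}. M i k * v k)"

definition msub :: "mat \<Rightarrow> mat \<Rightarrow> mat" where
  "msub M N = (\<lambda>i j. M i j - N i j)"

definition GLinf :: "mat set" where
  "GLinf = {M. finitary M \<and> (\<exists>N. finitary N \<and> mmult M N = idm \<and> mmult N M = idm)}"

definition conjugate_GL :: "mat \<Rightarrow> mat \<Rightarrow> bool" where
  "conjugate_GL A B \<longleftrightarrow> (\<exists>h N. h \<in> GLinf \<and> finitary N \<and> mmult h N = idm \<and> mmult N h = idm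
      \<and> A = mmult (mmult h B) N)"

definition rng :: "mat \<Rightarrow> vec set" where
  "rng M = {mvmult M v | v. finsupp v}"

fun ssum :: "vec set list \<Rightarrow> vec set" where
  "ssum [] = {(\<lambda>i. 0)}"
| "ssum (A # As) = {(\<lambda>i. a i + b i) | a b. a \<in> A \<and> b \<in> ssum As}"

definition mprod :: "mat list \<Rightarrow> mat" where
  "mprod ss = foldr mmult ss idm"

definition swap12 :: mat where
  "swap12 = (\<lambda>i j. if (i = 0 \<and> j = 1) \<or> (i = 1 \<and> j = 0) \<or> (i = j \<and> i \<ge> 2) then 1 else 0)"

end

theory Submission
  imports Defs
begin

(* A transvection I + u p^T with p(u) = 0 and u, p nonzero is an involution in GL(infinity, F_2),
   and swap12 is the transvection with u = p = e_1 + e_2. Conjugating by an elementary transvection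
   E turns (u, p) into (E u, p E); such moves shrink the support of u and then that of p until
   (u, p) = (e_1, e_2), so every transvection is conjugate to swap12.

   To factor g, pick a column j where g differs from I and let w = (g - I) e_j. A covector phi with
   phi(w) = 0, (phi g)_j = 1 and phi g vanishing on the columns fixed by g (phi = e_j^T or
   e_j^T + e_k^T) gives a transvection t = I + w phi^T such that t g agrees with I in column j and
   in every column fixed by g. Induction on the number of non-identity columns writes g as a
   product of transvections I + w phi^T with w in R(g - I), so each R(s_i - I) = F_2 w lies in
   R(g - I); conversely R(g - I) lies in the sum of the R(s_i - I) because
   s h - I = (s - I) h + (h - I). *)

\<comment> \<open>Treat + and * on bit as field operations rather than as xor and conjunction.\<close>
declare add_bit_eq_xor[simp del] mult_bit_eq_and[simp del]

lemma bit_minus_eq_add[simp]: "(a::bit) - b = a + b" by simp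
lemma bit_add_self[simp]: "(a::bit) + a = 0" by (cases a) simp_all
lemma bit_add_self_left[simp]: "(a::bit) + (a + b) = b" by (simp add: add.assoc[symmetric])
lemma bit_mult_eq_1_iff[simp]: "((a::bit) * b = 1) \<longleftrightarrow> a = 1 \<and> b = 1"
  by (cases a; cases b) simp_all
lemma bit_add_eq_1_iff[simp]: "((a::bit) + b = 1) \<longleftrightarrow> a \<noteq> b"
  by (cases a; cases b) simp_all

definition supp :: "vec \<Rightarrow> nat set" where
  "supp v = {k. v k \<noteq> 0}"

definition unit_vec :: "nat \<Rightarrow> vec" where
  "unit_vec c = (\<lambda>i. if i = c then 1 else 0)"

definition dot :: "vec \<Rightarrow> vec \<Rightarrow> bit" where
  "dot p v = (\<Sum>k\<in>supp p. p k * v k)"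

definition vec_mat :: "vec \<Rightarrow> mat \<Rightarrow> vec" where
  "vec_mat p M = (\<lambda>l. \<Sum>k\<in>supp p. p k * M k l)"

lemma finsupp_iff_finite_supp: "finsupp v \<longleftrightarrow> finite (supp v)"
  by (simp add: finsupp_def supp_def)

lemma finsupp_subset: "supp v \<subseteq> A \<Longrightarrow> finite A \<Longrightarrow> finsupp v"
  by (simp add: finsupp_iff_finite_supp finite_subset)

lemma supp_eq_empty_iff: "supp x = {} \<longleftrightarrow> x = (\<lambda>_. 0)"
  by (auto simp: supp_def fun_eq_iff)

lemma supp_unit_vec[simp]: "supp (unit_vec c) = {c}"
  by (auto simp: supp_def unit_vec_def)

lemma finsupp_unit_vec[simp]: "finsupp (unit_vec c)"
  by (simp add: finsupp_iff_finite_supp)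

lemma finsupp_zero: "finsupp (\<lambda>_. 0)"
  by (simp add: finsupp_def)

lemma finsupp_add: "finsupp v \<Longrightarrow> finsupp x \<Longrightarrow> finsupp (\<lambda>k. v k + x k)"
  by (rule finsupp_subset[where A = "supp v \<union> supp x"]) (auto simp: supp_def finsupp_iff_finite_supp)

lemma finsupp_scale_unit_vec: "finsupp (\<lambda>k. c * unit_vec j k)"
  by (rule finsupp_subset[where A = "{j}"]) (auto simp: supp_def unit_vec_def)

lemma unit_vec_eq_idm: "unit_vec c k = idm c k" "unit_vec c k = idm k c"
  by (auto simp: unit_vec_def idm_def)

lemma supp_eq_singleton:
  assumes "supp x = {c}" shows "x = unit_vec c"
proof
  fix i
  have "i \<in> supp x \<longleftrightarrow> i = c" using assms by simp
  then show "x i = unit_vec c i" by (cases "i = c") (auto simp: supp_def unit_vec_def)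
qed

lemma supp_add_unit_vec: "d \<in> supp x \<Longrightarrow> supp (\<lambda>i. x i + unit_vec d i) = supp x - {d}"
  by (auto simp: supp_def unit_vec_def)

lemma mmult_eq_sum:
  assumes "finite A" "\<And>k. M i k \<noteq> 0 \<Longrightarrow> N k j \<noteq> 0 \<Longrightarrow> k \<in> A"
  shows "mmult M N i j = (\<Sum>k\<in>A. M i k * N k j)"
  unfolding mmult_def by (rule sum.mono_neutral_left) (use assms in auto)

lemma mvmult_eq_sum:
  assumes "finite A" "\<And>k. M i k \<noteq> 0 \<Longrightarrow> v k \<noteq> 0 \<Longrightarrow> k \<in> A"
  shows "mvmult M v i = (\<Sum>k\<in>A. M i k * v k)"
  unfolding mvmult_def by (rule sum.mono_neutral_left) (use assms in auto)

lemma mvmult_eq_sum_supp: "finsupp v \<Longrightarrow> mvmult M v i = (\<Sum>k\<in>supp v. M i k * v k)"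
  by (rule mvmult_eq_sum) (auto simp: finsupp_iff_finite_supp supp_def)

lemma dot_eq_sum: "finite A \<Longrightarrow> supp p \<subseteq> A \<Longrightarrow> dot p v = (\<Sum>k\<in>A. p k * v k)"
  unfolding dot_def by (rule sum.mono_neutral_left) (auto simp: supp_def)

lemma vec_mat_eq_sum: "finite A \<Longrightarrow> supp p \<subseteq> A \<Longrightarrow> vec_mat p M l = (\<Sum>k\<in>A. p k * M k l)"
  unfolding vec_mat_def by (rule sum.mono_neutral_left) (auto simp: supp_def)

lemma sum_idm_mult: "finite A \<Longrightarrow> i \<in> A \<Longrightarrow> (\<Sum>k\<in>A. idm i k * f k) = f i"
  by (simp add: idm_def if_distrib[of "\<lambda>x. x * _"] cong: if_cong)

lemma sum_mult_idm: "finite A \<Longrightarrow> l \<in> A \<Longrightarrow> (\<Sum>k\<in>A. f k * idm k l) = f l"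
  by (simp add: idm_def if_distrib[of "\<lambda>x. _ * x"] eq_commute[of _ l] cong: if_cong)

lemma sum_unit_vec_mult: "finite A \<Longrightarrow> c \<in> A \<Longrightarrow> (\<Sum>k\<in>A. unit_vec c k * f k) = f c"
  unfolding unit_vec_eq_idm(1) by (rule sum_idm_mult)

lemma sum_mult_unit_vec: "finite A \<Longrightarrow> c \<in> A \<Longrightarrow> (\<Sum>k\<in>A. f k * unit_vec c k) = f c"
  unfolding unit_vec_eq_idm(2) by (rule sum_mult_idm)

lemma dot_unit_vec_left: "dot (unit_vec c) v = v c"
  by (simp add: dot_def) (simp add: unit_vec_def)

lemma dot_unit_vec_right: "finsupp p \<Longrightarrow> dot p (unit_vec c) = p c"
  by (subst dot_eq_sum[of "insert c (supp p)"])
     (auto simp: finsupp_iff_finite_supp unit_vec_eq_idm(2) sum_mult_idm)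

lemma mvmult_scale_unit_vec: "mvmult M (\<lambda>k. c * unit_vec j k) = (\<lambda>i. c * M i j)"
proof
  fix i show "mvmult M (\<lambda>k. c * unit_vec j k) i = c * M i j"
    by (subst mvmult_eq_sum[of "{j}"]) (auto simp: unit_vec_def split: if_splits)
qed

lemma mvmult_zero: "mvmult M (\<lambda>_. 0) = (\<lambda>_. 0)"
  by (simp add: mvmult_def fun_eq_iff)

lemma mvmult_add:
  assumes "finsupp v" "finsupp x"
  shows "mvmult M (\<lambda>k. v k + x k) = (\<lambda>i. mvmult M v i + mvmult M x i)"
proof
  fix i
  let ?A = "supp v \<union> supp x"
  have A: "finite ?A" using assms by (simp add: finsupp_iff_finite_supp)
  have "mvmult M (\<lambda>k. v k + x k) i = (\<Sum>k\<in>?A. M i k * v k) + (\<Sum>k\<in>?A. M i k * x k)"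
    by (subst mvmult_eq_sum[OF A]) (auto simp: supp_def distrib_left sum.distrib)
  also have "\<dots> = mvmult M v i + mvmult M x i"
    using mvmult_eq_sum[OF A, of M i v] mvmult_eq_sum[OF A, of M i x] by (auto simp: supp_def)
  finally show "mvmult M (\<lambda>k. v k + x k) i = mvmult M v i + mvmult M x i" .
qed

definition nonid_entries :: "mat \<Rightarrow> (nat \<times> nat) set" where
  "nonid_entries M = {(i, j). M i j \<noteq> idm i j}"

lemma finitary_iff_finite_nonid_entries: "finitary M \<longleftrightarrow> finite (nonid_entries M)"
  by (simp add: finitary_def nonid_entries_def)

lemma finite_row_support:
  assumes "finitary M" shows "finite {k. M i k \<noteq> 0}"
proof -
  have "{k. M i k \<noteq> 0} \<subseteq> insert i (snd ` nonid_entries M)"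
  proof
    fix k assume "k \<in> {k. M i k \<noteq> 0}"
    then have "k = i \<or> (i, k) \<in> nonid_entries M" by (auto simp: nonid_entries_def idm_def)
    then show "k \<in> insert i (snd ` nonid_entries M)" by (auto intro: rev_image_eqI)
  qed
  then show ?thesis
    using assms finite_subset by (auto simp: finitary_iff_finite_nonid_entries)
qed

lemma finite_col_support:
  assumes "finitary M" shows "finite {k. M k j \<noteq> 0}"
proof -
  have "{k. M k j \<noteq> 0} \<subseteq> insert j (fst ` nonid_entries M)"
  proof
    fix k assume "k \<in> {k. M k j \<noteq> 0}"
    then have "k = j \<or> (k, j) \<in> nonid_entries M" by (auto simp: nonid_entries_def idm_def)
    then show "k \<in> insert j (fst ` nonid_entries M)" by (auto intro: rev_image_eqI)
  qed
  then show ?thesis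
    using assms finite_subset by (auto simp: finitary_iff_finite_nonid_entries)
qed

lemma mmult_assoc:
  assumes "finitary M" "finitary P"
  shows "mmult (mmult M N) P = mmult M (mmult N P)"
proof (intro ext)
  fix i j
  let ?R = "{l. M i l \<noteq> 0}" and ?C = "{k. P k j \<noteq> 0}"
  have R: "finite ?R" and C: "finite ?C"
    using finite_row_support[OF assms(1)] finite_col_support[OF assms(2)] .
  have "mmult (mmult M N) P i j = (\<Sum>k\<in>?C. (\<Sum>l\<in>?R. M i l * N l k) * P k j)"
    by (subst mmult_eq_sum[OF C], simp,
        intro sum.cong refl arg_cong2[where f="(*)"] mmult_eq_sum[OF R]) auto
  also have "\<dots> = (\<Sum>l\<in>?R. M i l * (\<Sum>k\<in>?C. N l k * P k j))"
    unfolding sum_distrib_left sum_distrib_right mult.assoc by (rule sum.swap)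
  also have "\<dots> = mmult M (mmult N P) i j"
    by (subst mmult_eq_sum[OF R], simp,
        intro sum.cong refl arg_cong2[where f="(*)"] mmult_eq_sum[OF C, symmetric]) auto
  finally show "mmult (mmult M N) P i j = mmult M (mmult N P) i j" .
qed

lemma mmult_idm_left[simp]: "mmult idm N = N"
proof (intro ext)
  fix i j show "mmult idm N i j = N i j"
    by (subst mmult_eq_sum[of "{i}"]) (auto simp: idm_def split: if_splits)
qed

lemma mmult_idm_right[simp]: "mmult M idm = M"
proof (intro ext)
  fix i j show "mmult M idm i j = M i j"
    by (subst mmult_eq_sum[of "{j}"]) (auto simp: idm_def split: if_splits)
qed

lemma finitary_idm[simp]: "finitary idm"
  by (simp add: finitary_def)

lemma finitary_mmult[simp]:
  assumes "finitary M" "finitary N" shows "finitary (mmult M N)"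
proof -
  have "(i, j) \<in> nonid_entries M \<union> nonid_entries N
          \<or> i \<in> fst ` nonid_entries M \<and> j \<in> snd ` nonid_entries N"
    if ij: "(i, j) \<in> nonid_entries (mmult M N)" for i j
  proof (rule ccontr)
    assume outside: "\<not> ?thesis"
    then consider "\<And>k. M i k = idm i k" | "\<And>k. N k j = idm k j"
      by (force simp: nonid_entries_def image_iff)
    then have "mmult M N i j = M i j \<or> mmult M N i j = N i j"
    proof cases
      case 1 then show ?thesis by (subst mmult_eq_sum[of "{i}"]) (auto simp: idm_def split: if_splits)
    next
      case 2 then show ?thesis by (subst mmult_eq_sum[of "{j}"]) (auto simp: idm_def split: if_splits)
    qed
    then show False using ij outside by (auto simp: nonid_entries_def)
  qed
  then have "nonid_entries (mmult M N)
        \<subseteq> nonid_entries M \<union> nonid_entries N \<union> fst ` nonid_entries M \<times> snd ` nonid_entries N"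
    by auto
  then show ?thesis
    using assms by (simp add: finitary_iff_finite_nonid_entries finite_subset)
qed

section \<open>Transvections\<close>

definition transvection :: "vec \<Rightarrow> vec \<Rightarrow> mat" where
  "transvection u p = (\<lambda>i l. idm i l + u i * p l)"

definition e01 :: vec where
  "e01 = (\<lambda>i. if i < 2 then 1 else 0)"

lemma finitary_transvection[simp]:
  assumes "finsupp u" "finsupp p" shows "finitary (transvection u p)"
proof -
  have "nonid_entries (transvection u p) \<subseteq> supp u \<times> supp p"
    by (auto simp: nonid_entries_def transvection_def supp_def)
  then show ?thesis
    using assms by (simp add: finitary_iff_finite_nonid_entries finsupp_iff_finite_supp finite_subset)
qed

lemma finsupp_e01: "finsupp e01"
  by (rule finsupp_subset[where A = "{0, 1}"]) (auto simp: supp_def e01_def)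

lemma swap12_eq_transvection: "swap12 = transvection e01 e01"
  by (auto simp: fun_eq_iff swap12_def transvection_def e01_def idm_def)

lemma finitary_swap12: "finitary swap12"
  using finsupp_e01 by (simp add: swap12_eq_transvection)

lemma msub_transvection_idm: "msub (transvection u p) idm = (\<lambda>i l. u i * p l)"
  by (simp add: msub_def transvection_def fun_eq_iff add.commute)

lemma transvection_mmult:
  assumes "finsupp p"
  shows "mmult (transvection u p) M = (\<lambda>i l. M i l + u i * vec_mat p M l)"
proof (intro ext)
  fix i l
  let ?A = "insert i (supp p)"
  have A: "finite ?A" using assms by (simp add: finsupp_iff_finite_supp)
  have "mmult (transvection u p) M i l = (\<Sum>k\<in>?A. (idm i k + u i * p k) * M k l)"
    by (subst mmult_eq_sum[OF A]) (auto simp: transvection_def idm_def supp_def split: if_splits)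
  also have "\<dots> = (\<Sum>k\<in>?A. idm i k * M k l) + u i * (\<Sum>k\<in>?A. p k * M k l)"
    by (simp add: distrib_right sum.distrib sum_distrib_left mult.assoc)
  also have "\<dots> = M i l + u i * vec_mat p M l"
    using A by (simp add: sum_idm_mult vec_mat_eq_sum[OF A subset_insertI])
  finally show "mmult (transvection u p) M i l = M i l + u i * vec_mat p M l" .
qed

lemma mvmult_transvection:
  assumes "finsupp p"
  shows "mvmult (transvection u p) x = (\<lambda>i. x i + u i * dot p x)"
proof (intro ext)
  fix i
  let ?A = "insert i (supp p)"
  have A: "finite ?A" using assms by (simp add: finsupp_iff_finite_supp)
  have "mvmult (transvection u p) x i = (\<Sum>k\<in>?A. (idm i k + u i * p k) * x k)"
    by (subst mvmult_eq_sum[OF A]) (auto simp: transvection_def idm_def supp_def split: if_splits)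
  also have "\<dots> = (\<Sum>k\<in>?A. idm i k * x k) + u i * (\<Sum>k\<in>?A. p k * x k)"
    by (simp add: distrib_right sum.distrib sum_distrib_left mult.assoc)
  also have "\<dots> = x i + u i * dot p x"
    using A by (simp add: sum_idm_mult dot_eq_sum[OF A subset_insertI])
  finally show "mvmult (transvection u p) x i = x i + u i * dot p x" .
qed

lemma vec_mat_transvection:
  assumes "finsupp p"
  shows "vec_mat p (transvection u q) = (\<lambda>l. p l + dot p u * q l)"
proof (intro ext)
  fix l
  let ?A = "insert l (supp p)"
  have A: "finite ?A" using assms by (simp add: finsupp_iff_finite_supp)
  have "vec_mat p (transvection u q) l = (\<Sum>k\<in>?A. p k * (idm k l + u k * q l))"
    unfolding transvection_def by (rule vec_mat_eq_sum[OF A subset_insertI])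
  also have "\<dots> = (\<Sum>k\<in>?A. p k * idm k l) + (\<Sum>k\<in>?A. p k * u k) * q l"
    by (simp add: distrib_left sum.distrib sum_distrib_right mult.assoc)
  also have "\<dots> = p l + dot p u * q l"
    using A by (simp add: sum_mult_idm dot_eq_sum[OF A subset_insertI])
  finally show "vec_mat p (transvection u q) l = p l + dot p u * q l" .
qed

lemma transvection_involution:
  assumes "finsupp p" "dot p u = 0"
  shows "mmult (transvection u p) (transvection u p) = idm"
  using assms by (simp add: transvection_mmult vec_mat_transvection) (simp add: transvection_def add.assoc)

lemma transvection_in_GLinf:
  assumes "finsupp u" "finsupp p" "dot p u = 0"
  shows "transvection u p \<in> GLinf"
  using assms transvection_involution[OF assms(2,3)] unfolding GLinf_def
  by (auto intro!: exI[of _ "transvection u p"])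

lemma conjugate_transvection:
  assumes "finitary h" "finitary N" "mmult h N = idm" "finsupp p"
  shows "mmult (mmult h (transvection u p)) N = transvection (mvmult h u) (vec_mat p N)"
proof -
  have "mmult (mmult h (transvection u p)) N = mmult h (\<lambda>i l. N i l + u i * vec_mat p N l)"
    using assms by (simp add: mmult_assoc transvection_mmult)
  also have "\<dots> = transvection (mvmult h u) (vec_mat p N)"
  proof (intro ext)
    fix i l
    let ?R = "{k. h i k \<noteq> 0}"
    have R: "finite ?R" using finite_row_support[OF assms(1)] .
    have "mmult h (\<lambda>i l. N i l + u i * vec_mat p N l) i l
          = (\<Sum>k\<in>?R. h i k * N k l) + (\<Sum>k\<in>?R. h i k * u k) * vec_mat p N l"
      by (subst mmult_eq_sum[OF R]) (auto simp: distrib_left sum.distrib sum_distrib_right mult.assoc)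
    also have "\<dots> = mmult h N i l + mvmult h u i * vec_mat p N l"
      using mmult_eq_sum[OF R, of h i N l] mvmult_eq_sum[OF R, of h i u] by simp
    finally show "mmult h (\<lambda>i l. N i l + u i * vec_mat p N l) i l
                  = transvection (mvmult h u) (vec_mat p N) i l"
      using assms(3) by (simp add: transvection_def)
  qed
  finally show ?thesis .
qed

section \<open>Conjugacy of transvections to swap12\<close>

lemma conjugate_GL_conj:
  assumes "conjugate_GL A B" "finitary B"
    and "finitary h" "finitary N" "mmult h N = idm" "mmult N h = idm"
  shows "conjugate_GL (mmult (mmult h A) N) B"
proof -
  obtain h1 N1 where h1: "h1 \<in> GLinf" "finitary N1" "mmult h1 N1 = idm" "mmult N1 h1 = idm"
    and A: "A = mmult (mmult h1 B) N1"
    using assms(1) unfolding conjugate_GL_def by blast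
  have fin: "finitary h1" "finitary (mmult h h1)" "finitary (mmult N1 N)"
    using h1 assms by (simp_all add: GLinf_def)
  have inv: "mmult (mmult h h1) (mmult N1 N) = idm" "mmult (mmult N1 N) (mmult h h1) = idm"
    using assms fin h1 by (metis mmult_assoc mmult_idm_left finitary_mmult)+
  have "mmult (mmult h A) N = mmult (mmult (mmult h h1) B) (mmult N1 N)"
    unfolding A using assms fin h1 by (simp add: mmult_assoc)
  then show ?thesis
    unfolding conjugate_GL_def GLinf_def using fin inv by blast
qed

text \<open>The column vector E x and the row vector p E for the elementary transvection
  E = transvection (unit_vec a) (unit_vec b).\<close>

definition elem_vec :: "nat \<Rightarrow> nat \<Rightarrow> vec \<Rightarrow> vec" where
  "elem_vec a b x = (\<lambda>i. x i + unit_vec a i * x b)"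

definition elem_covec :: "nat \<Rightarrow> nat \<Rightarrow> vec \<Rightarrow> vec" where
  "elem_covec a b p = (\<lambda>l. p l + p a * unit_vec b l)"

lemma elem_vec_involution: "a \<noteq> b \<Longrightarrow> elem_vec a b (elem_vec a b x) = x"
  by (simp add: elem_vec_def unit_vec_def fun_eq_iff add.assoc)

lemma elem_covec_involution: "a \<noteq> b \<Longrightarrow> elem_covec a b (elem_covec a b p) = p"
  by (simp add: elem_covec_def unit_vec_def fun_eq_iff add.assoc)

lemma finsupp_elem_vec: "finsupp x \<Longrightarrow> finsupp (elem_vec a b x)"
  by (rule finsupp_subset[where A = "insert a (supp x)"])
     (auto simp: supp_def elem_vec_def unit_vec_def finsupp_iff_finite_supp)

lemma finsupp_elem_covec: "finsupp p \<Longrightarrow> finsupp (elem_covec a b p)"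
  by (rule finsupp_subset[where A = "insert b (supp p)"])
     (auto simp: supp_def elem_covec_def unit_vec_def finsupp_iff_finite_supp)

lemma conjugate_swap12_elementary:
  assumes "a \<noteq> b" "finsupp u" "finsupp p"
    and "conjugate_GL (transvection (elem_vec a b u) (elem_covec a b p)) swap12"
  shows "conjugate_GL (transvection u p) swap12"
proof -
  define E where "E = transvection (unit_vec a) (unit_vec b)"
  have "dot (unit_vec b) (unit_vec a) = 0"
    using assms(1) by (simp add: dot_unit_vec_left) (simp add: unit_vec_def)
  then have E: "finitary E" "mmult E E = idm"
    unfolding E_def by (simp_all add: transvection_involution)
  have "mvmult E x = elem_vec a b x" for x
    by (simp add: E_def mvmult_transvection dot_unit_vec_left elem_vec_def)
  moreover have "finsupp q \<Longrightarrow> vec_mat q E = elem_covec a b q" for q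
    by (simp add: E_def vec_mat_transvection dot_unit_vec_right elem_covec_def)
  ultimately have "mmult (mmult E (transvection (elem_vec a b u) (elem_covec a b p))) E
                   = transvection u p"
    using assms(1-3) E
    by (simp add: conjugate_transvection finsupp_elem_covec elem_vec_involution elem_covec_involution)
  then show ?thesis
    using conjugate_GL_conj[OF assms(4) finitary_swap12 E(1) E(1) E(2) E(2)] by simp
qed

definition isotropic_pair :: "vec \<Rightarrow> vec \<Rightarrow> bool" where
  "isotropic_pair u p \<longleftrightarrow> finsupp u \<and> finsupp p \<and> supp u \<noteq> {} \<and> supp p \<noteq> {} \<and> dot p u = 0"

lemma dot_elem_covec_elem_vec:
  assumes "a \<noteq> b" "finsupp p"
  shows "dot (elem_covec a b p) (elem_vec a b u) = dot p u"
proof -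
  let ?A = "insert a (insert b (supp p))"
  have A: "finite ?A" using assms by (simp add: finsupp_iff_finite_supp)
  have "supp (elem_covec a b p) \<subseteq> ?A"
    by (auto simp: supp_def elem_covec_def unit_vec_def)
  then have "dot (elem_covec a b p) (elem_vec a b u)
             = (\<Sum>k\<in>?A. (p k + p a * unit_vec b k) * (u k + unit_vec a k * u b))"
    by (simp add: dot_eq_sum[OF A] elem_covec_def elem_vec_def)
  also have "\<dots> = (\<Sum>k\<in>?A. p k * u k) + (\<Sum>k\<in>?A. p k * unit_vec a k) * u b
        + p a * (\<Sum>k\<in>?A. unit_vec b k * u k) + p a * u b * (\<Sum>k\<in>?A. unit_vec b k * unit_vec a k)"
    by (simp add: algebra_simps sum.distrib sum_distrib_left sum_distrib_right)
  also have "\<dots> = (\<Sum>k\<in>?A. p k * u k)"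
    using A assms(1) by (simp add: sum_unit_vec_mult sum_mult_unit_vec) (simp add: unit_vec_def)
  also have "\<dots> = dot p u"
    by (rule dot_eq_sum[OF A, symmetric]) auto
  finally show ?thesis .
qed

lemma isotropic_pair_elementary:
  assumes "isotropic_pair u p" "a \<noteq> b"
  shows "isotropic_pair (elem_vec a b u) (elem_covec a b p)"
proof -
  have "elem_vec a b (\<lambda>_. 0) = (\<lambda>_. 0)" "elem_covec a b (\<lambda>_. 0) = (\<lambda>_. 0)"
    by (simp_all add: elem_vec_def elem_covec_def)
  then have "supp (elem_vec a b u) \<noteq> {}" "supp (elem_covec a b p) \<noteq> {}"
    using assms(1) elem_vec_involution[OF assms(2), of u] elem_covec_involution[OF assms(2), of p]
    unfolding isotropic_pair_def supp_eq_empty_iff by auto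
  then show ?thesis
    using assms dot_elem_covec_elem_vec[OF assms(2)]
    by (simp add: isotropic_pair_def finsupp_elem_vec finsupp_elem_covec)
qed

lemma finsupp_nonzero_induct[consumes 2, case_names unit_vec clear]:
  assumes "finsupp x" "supp x \<noteq> {}"
    and unit_vec: "\<And>c. P (unit_vec c)"
    and clear: "\<And>x c d. finsupp x \<Longrightarrow> c \<in> supp x \<Longrightarrow> d \<in> supp x \<Longrightarrow> c \<noteq> d
                  \<Longrightarrow> P (\<lambda>i. x i + unit_vec d i) \<Longrightarrow> P x"
  shows "P x"
  using assms(1,2)
proof (induction "card (supp x)" arbitrary: x rule: less_induct)
  case less
  obtain c where c: "c \<in> supp x" using less.prems(2) by blast
  show ?case
  proof (cases "supp x = {c}")
    case True
    then show ?thesis using unit_vec supp_eq_singleton by blast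
  next
    case False
    then obtain d where d: "d \<in> supp x" "c \<noteq> d" using c by blast
    let ?y = "\<lambda>i. x i + unit_vec d i"
    have supp_y: "supp ?y = supp x - {d}" using supp_add_unit_vec[OF d(1)] .
    have "finite (supp x)" using less.prems(1) by (simp add: finsupp_iff_finite_supp)
    then have "card (supp ?y) < card (supp x)" unfolding supp_y using d(1) by (rule card_Diff1_less)
    moreover have "finsupp ?y" "supp ?y \<noteq> {}"
      using less.prems(1) c d by (auto simp: finsupp_add supp_y)
    ultimately have "P ?y" using less.hyps by blast
    then show ?thesis using clear less.prems(1) c d by blast
  qed
qed

lemma conjugate_swap12_base: "conjugate_GL (transvection (unit_vec 0) (unit_vec 1)) swap12"
proof (rule conjugate_swap12_elementary[of 1 0])
  have "elem_vec 1 0 (unit_vec 0) = e01" "elem_covec 1 0 (unit_vec 1) = e01"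
    by (auto simp: elem_vec_def elem_covec_def unit_vec_def e01_def fun_eq_iff)
  moreover have "conjugate_GL swap12 swap12"
    unfolding conjugate_GL_def GLinf_def using finitary_swap12 by (intro exI[of _ idm]) auto
  ultimately show
    "conjugate_GL (transvection (elem_vec 1 0 (unit_vec 0)) (elem_covec 1 0 (unit_vec 1))) swap12"
    by (simp add: swap12_eq_transvection)
qed auto

lemma conjugate_swap12_unit_vec_0:
  assumes "isotropic_pair (unit_vec 0) p"
  shows "conjugate_GL (transvection (unit_vec 0) p) swap12"
proof -
  have "finsupp p" "supp p \<noteq> {}" using assms by (auto simp: isotropic_pair_def)
  then show ?thesis using assms
  proof (induction p rule: finsupp_nonzero_induct)
    case (unit_vec c)
    then have "c \<noteq> 0"
      by (simp add: isotropic_pair_def dot_unit_vec_left) (simp add: unit_vec_def split: if_splits)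
    show ?case
    proof (cases "c = 1")
      case True
      then show ?thesis using conjugate_swap12_base by simp
    next
      case False
      let ?q = "\<lambda>l. unit_vec c l + unit_vec 1 l"
      have "elem_vec 1 c (unit_vec 0) = unit_vec 0" "elem_covec 1 c ?q = unit_vec 1"
        "elem_vec c 1 (unit_vec 0) = unit_vec 0" "elem_covec c 1 (unit_vec c) = ?q"
        using \<open>c \<noteq> 0\<close> False by (auto simp: elem_vec_def elem_covec_def unit_vec_def fun_eq_iff)
      then have "conjugate_GL (transvection (unit_vec 0) ?q) swap12"
        using conjugate_swap12_elementary[of 1 c "unit_vec 0" ?q] conjugate_swap12_base False
        by (simp add: finsupp_add)
      then show ?thesis
        using conjugate_swap12_elementary[of c 1 "unit_vec 0" "unit_vec c"] False
          \<open>elem_vec c 1 (unit_vec 0) = unit_vec 0\<close> \<open>elem_covec c 1 (unit_vec c) = ?q\<close>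
        by simp
    qed
  next
    case (clear p c d)
    have "p 0 = 0"
      using clear.prems dot_unit_vec_right[of p 0] by (simp add: isotropic_pair_def)
    then have "d \<noteq> 0" using clear.hyps(3) by (cases "d = 0") (simp_all add: supp_def)
    then have moves: "elem_vec c d (unit_vec 0) = unit_vec 0"
      "elem_covec c d p = (\<lambda>i. p i + unit_vec d i)"
      using clear.hyps(2) by (auto simp: elem_vec_def elem_covec_def unit_vec_def supp_def fun_eq_iff)
    have "isotropic_pair (unit_vec 0) (\<lambda>i. p i + unit_vec d i)"
      using isotropic_pair_elementary[OF clear.prems clear.hyps(4)] moves by simp
    then show ?case
      using clear.IH clear.hyps conjugate_swap12_elementary[of c d "unit_vec 0" p] moves by simp
  qed
qed

theorem transvection_conjugate_swap12:
  assumes "isotropic_pair u p"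
  shows "conjugate_GL (transvection u p) swap12"
proof -
  have "finsupp u" "supp u \<noteq> {}" using assms by (auto simp: isotropic_pair_def)
  then show ?thesis using assms
  proof (induction u arbitrary: p rule: finsupp_nonzero_induct)
    case (unit_vec c)
    show ?case
    proof (cases "c = 0")
      case True
      then show ?thesis using unit_vec.prems conjugate_swap12_unit_vec_0 by simp
    next
      case False
      let ?v = "\<lambda>i. unit_vec c i + unit_vec 0 i"
      have moves: "elem_vec 0 c (unit_vec c) = ?v" "elem_vec c 0 ?v = unit_vec 0"
        using False by (auto simp: elem_vec_def unit_vec_def fun_eq_iff)
      have iso: "isotropic_pair ?v (elem_covec 0 c p)"
        using isotropic_pair_elementary[OF unit_vec.prems, of 0 c] False moves by simp
      then have "isotropic_pair (unit_vec 0) (elem_covec c 0 (elem_covec 0 c p))"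
        using isotropic_pair_elementary[OF iso, of c 0] False moves by simp
      then have "conjugate_GL (transvection ?v (elem_covec 0 c p)) swap12"
        using conjugate_swap12_unit_vec_0 conjugate_swap12_elementary[of c 0 ?v] iso False moves
        by (simp add: isotropic_pair_def)
      then show ?thesis
        using conjugate_swap12_elementary[of 0 c "unit_vec c" p] unit_vec.prems False moves
        by (simp add: isotropic_pair_def)
    qed
  next
    case (clear u c d)
    have move: "elem_vec d c u = (\<lambda>i. u i + unit_vec d i)"
      using clear.hyps(2) by (auto simp: elem_vec_def supp_def fun_eq_iff)
    have "isotropic_pair (\<lambda>i. u i + unit_vec d i) (elem_covec d c p)"
      using isotropic_pair_elementary[OF clear.prems, of d c] clear.hyps(4) move by simp
    then show ?case
      using clear.IH conjugate_swap12_elementary[of d c u p] clear.hyps clear.prems move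
      by (simp add: isotropic_pair_def)
  qed
qed

section \<open>Ranges\<close>

lemma rng_memI: "finsupp v \<Longrightarrow> mvmult M v \<in> rng M"
  by (auto simp: rng_def)

lemma zero_in_rng: "(\<lambda>_. 0) \<in> rng M"
  using rng_memI[OF finsupp_zero] by (simp add: mvmult_zero)

lemma rng_add:
  assumes "a \<in> rng M" "b \<in> rng M" shows "(\<lambda>i. a i + b i) \<in> rng M"
proof -
  obtain v x where v: "finsupp v" "a = mvmult M v" and x: "finsupp x" "b = mvmult M x"
    using assms by (auto simp: rng_def)
  then show ?thesis
    using rng_memI[OF finsupp_add[OF v(1) x(1)]] by (simp add: mvmult_add)
qed

lemma ssum_Cons_memI: "a \<in> A \<Longrightarrow> b \<in> ssum As \<Longrightarrow> (\<lambda>i. a i + b i) \<in> ssum (A # As)"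
  by auto

lemma ssum_subset_rng: "\<forall>A\<in>set As. A \<subseteq> rng M \<Longrightarrow> ssum As \<subseteq> rng M"
proof (induction As)
  case Nil
  then show ?case using zero_in_rng by simp
next
  case (Cons A As)
  show ?case
  proof
    fix x assume "x \<in> ssum (A # As)"
    then obtain a b where "x = (\<lambda>i. a i + b i)" "a \<in> A" "b \<in> ssum As" by auto
    then show "x \<in> rng M" using Cons rng_add[of a M b] by auto
  qed
qed

lemma rng_transvection_minus_idm:
  assumes "finsupp p"
  shows "rng (msub (transvection u p) idm) \<subseteq> {u, \<lambda>_. 0}"
proof
  fix x assume "x \<in> rng (msub (transvection u p) idm)"
  then obtain v where v: "finsupp v" "x = mvmult (msub (transvection u p) idm) v"
    by (auto simp: rng_def)
  then have "x = (\<lambda>i. u i * (\<Sum>l\<in>supp v. p l * v l))"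
    by (simp add: fun_eq_iff mvmult_eq_sum_supp msub_transvection_idm sum_distrib_left mult.assoc)
  then show "x \<in> {u, \<lambda>_. 0}" by (cases "\<Sum>l\<in>supp v. p l * v l") simp_all
qed

lemma scaled_in_rng_transvection_minus_idm:
  assumes "p q = 1"
  shows "(\<lambda>i. u i * c) \<in> rng (msub (transvection u p) idm)"
  using rng_memI[OF finsupp_scale_unit_vec, of "msub (transvection u p) idm" c q] assms
  by (simp add: mvmult_scale_unit_vec msub_transvection_idm mult.commute)

lemma mvmult_transvection_mmult_minus_idm:
  assumes "finsupp p" "finsupp v"
  obtains c where "mvmult (msub (mmult (transvection u p) G) idm) v
                   = (\<lambda>i. mvmult (msub G idm) v i + u i * c)"
proof
  let ?c = "\<Sum>l\<in>supp v. vec_mat p G l * v l"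
  show "mvmult (msub (mmult (transvection u p) G) idm) v = (\<lambda>i. mvmult (msub G idm) v i + u i * ?c)"
  proof
    fix i
    have "mvmult (msub (mmult (transvection u p) G) idm) v i
          = (\<Sum>l\<in>supp v. (G i l + idm i l) * v l + u i * (vec_mat p G l * v l))"
      using assms by (simp add: mvmult_eq_sum_supp transvection_mmult msub_def algebra_simps)
    also have "\<dots> = mvmult (msub G idm) v i + u i * ?c"
      using assms by (simp add: mvmult_eq_sum_supp msub_def sum.distrib sum_distrib_left)
    finally show "mvmult (msub (mmult (transvection u p) G) idm) v i = mvmult (msub G idm) v i + u i * ?c" .
  qed
qed

lemma rng_mprod_subset_ssum:
  assumes "\<forall>s\<in>set ss. \<exists>u p. s = transvection u p \<and> finsupp p \<and> supp p \<noteq> {}"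
  shows "rng (msub (mprod ss) idm) \<subseteq> ssum (map (\<lambda>s. rng (msub s idm)) ss)"
  using assms
proof (induction ss)
  case Nil
  have "msub idm idm = (\<lambda>_ _. 0)" by (simp add: msub_def)
  then show ?case by (auto simp: rng_def mprod_def mvmult_def)
next
  case (Cons t ss)
  then obtain u p where t: "t = transvection u p" "finsupp p" "supp p \<noteq> {}" by auto
  then obtain q where q: "p q = 1" by (auto simp: supp_def)
  show ?case
  proof
    fix x assume "x \<in> rng (msub (mprod (t # ss)) idm)"
    then obtain v where v: "finsupp v" "x = mvmult (msub (mmult t (mprod ss)) idm) v"
      by (auto simp: rng_def mprod_def)
    obtain c where c: "x = (\<lambda>i. mvmult (msub (mprod ss) idm) v i + u i * c)"
      using mvmult_transvection_mmult_minus_idm[OF t(2) v(1)] v(2) t(1) by blast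
    have "mvmult (msub (mprod ss) idm) v \<in> ssum (map (\<lambda>s. rng (msub s idm)) ss)"
      using Cons v(1) by (auto simp: rng_def)
    moreover have "(\<lambda>i. u i * c) \<in> rng (msub t idm)"
      using scaled_in_rng_transvection_minus_idm[where p = p, OF q] t(1) by simp
    ultimately show "x \<in> ssum (map (\<lambda>s. rng (msub s idm)) (t # ss))"
      unfolding c using ssum_Cons_memI by (simp add: add.commute)
  qed
qed

section \<open>Factorization into transvections\<close>

definition nonid_cols :: "mat \<Rightarrow> nat set" where
  "nonid_cols g = {j. \<exists>i. g i j \<noteq> idm i j}"

lemma finite_nonid_cols:
  assumes "finitary g" shows "finite (nonid_cols g)"
proof -
  have "nonid_cols g \<subseteq> snd ` nonid_entries g"
    by (auto simp: nonid_cols_def nonid_entries_def image_iff)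
  then show ?thesis
    using assms by (simp add: finitary_iff_finite_nonid_entries finite_subset)
qed

lemma finsupp_col_minus_idm:
  assumes "finitary g" shows "finsupp (\<lambda>i. g i j - idm i j)"
proof (rule finsupp_subset)
  show "supp (\<lambda>i. g i j - idm i j) \<subseteq> fst ` nonid_entries g"
    by (auto simp: supp_def nonid_entries_def image_iff)
  show "finite (fst ` nonid_entries g)"
    using assms by (simp add: finitary_iff_finite_nonid_entries)
qed

lemma col_minus_idm_in_rng: "(\<lambda>i. g i j - idm i j) \<in> rng (msub g idm)"
  using rng_memI[OF finsupp_unit_vec, of "msub g idm" j] mvmult_scale_unit_vec[of "msub g idm" 1 j]
  by (simp add: msub_def)

lemma rng_transvection_mmult_subset:
  assumes "finsupp p" "w = (\<lambda>i. g i j - idm i j)"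
  shows "rng (msub (mmult (transvection w p) g) idm) \<subseteq> rng (msub g idm)"
proof
  fix x assume "x \<in> rng (msub (mmult (transvection w p) g) idm)"
  then obtain v where v: "finsupp v" "x = mvmult (msub (mmult (transvection w p) g) idm) v"
    by (auto simp: rng_def)
  obtain c where c: "x = (\<lambda>i. mvmult (msub g idm) v i + w i * c)"
    using mvmult_transvection_mmult_minus_idm[OF assms(1) v(1)] v(2) by blast
  have "x = mvmult (msub g idm) (\<lambda>k. v k + c * unit_vec j k)"
    unfolding c assms(2)
    by (simp add: mvmult_add[OF v(1) finsupp_scale_unit_vec] mvmult_scale_unit_vec msub_def mult.commute)
  then show "x \<in> rng (msub g idm)"
    using rng_memI[OF finsupp_add[OF v(1) finsupp_scale_unit_vec]] by simp
qed

lemma nonid_col_offdiag_entry: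
  assumes "finitary g" "mmult N g = idm" "g j j = 0"
  obtains k where "k \<in> nonid_cols g" "k \<noteq> j" "g k j = 1"
proof -
  let ?K = "{k. g k j \<noteq> 0}"
  have "\<exists>k\<in>?K. k \<in> nonid_cols g"
  proof (rule ccontr)
    assume none: "\<not> ?thesis"
    \<comment> \<open>then every column k with g k j = 1 is fixed by g, hence by N, so (N g) j j = 0\<close>
    have "N j k = 0" if "k \<in> ?K" for k
    proof -
      have "k \<noteq> j" using that assms(3) by auto
      moreover have col: "\<And>m. g m k = idm m k"
        using that none by (fastforce simp: nonid_cols_def)
      then have "mmult N g j k = N j k"
        by (subst mmult_eq_sum[of "{k}"]) (auto simp: idm_def split: if_splits)
      ultimately show ?thesis using assms(2) by (simp add: idm_def)
    qed
    then have "mmult N g j j = 0"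
      by (subst mmult_eq_sum[OF finite_col_support[OF assms(1), of j]]) auto
    then show False using assms(2) by (simp add: idm_def)
  qed
  then obtain k where "g k j \<noteq> 0" "k \<in> nonid_cols g" by blast
  then show ?thesis using that[of k] assms(3) by (cases "k = j") simp_all
qed

lemma vec_mat_unit_vec: "vec_mat (unit_vec j) g = (\<lambda>l. g j l)"
  by (simp add: vec_mat_def fun_eq_iff) (simp add: unit_vec_def)

lemma exists_clearing_covector:
  assumes "finitary g" "mmult N g = idm" "j \<in> nonid_cols g"
  obtains \<phi> where "finsupp \<phi>" "supp \<phi> \<noteq> {}" "dot \<phi> (\<lambda>i. g i j - idm i j) = 0"
    "vec_mat \<phi> g j = 1" "\<And>l. l \<notin> nonid_cols g \<Longrightarrow> vec_mat \<phi> g l = 0"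
proof (cases "g j j = 1")
  case True
  have "vec_mat (unit_vec j) g l = 0" if "l \<notin> nonid_cols g" for l
    using that assms(3) by (auto simp: vec_mat_unit_vec nonid_cols_def idm_def)
  then show ?thesis
    using that[of "unit_vec j"] True by (simp add: vec_mat_unit_vec dot_unit_vec_left idm_def)
next
  case False
  then obtain k where k: "k \<in> nonid_cols g" "k \<noteq> j" "g k j = 1"
    using nonid_col_offdiag_entry[OF assms(1,2)] by auto
  let ?\<phi> = "\<lambda>l. unit_vec j l + unit_vec k l"
  have supp_\<phi>: "supp ?\<phi> = {j, k}" using k(2) by (auto simp: supp_def unit_vec_def)
  have vec_mat_\<phi>: "vec_mat ?\<phi> g l = g j l + g k l" for l
    using vec_mat_eq_sum[of "{j, k}" ?\<phi> g l] supp_\<phi> k(2) by (simp add: unit_vec_def)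
  have "vec_mat ?\<phi> g l = 0" if "l \<notin> nonid_cols g" for l
    using that assms(3) k(1) unfolding vec_mat_\<phi> by (auto simp: nonid_cols_def idm_def)
  moreover have "dot ?\<phi> (\<lambda>i. g i j - idm i j) = 0"
    using dot_eq_sum[of "{j, k}" ?\<phi>] supp_\<phi> k False by (simp add: unit_vec_def idm_def)
  ultimately show ?thesis
    using that[of ?\<phi>] supp_\<phi> False k by (simp add: finsupp_iff_finite_supp vec_mat_\<phi>)
qed

lemma nonid_cols_transvection_mmult:
  assumes "finsupp \<phi>" "w = (\<lambda>i. g i j - idm i j)"
    and "vec_mat \<phi> g j = 1" "\<And>l. l \<notin> nonid_cols g \<Longrightarrow> vec_mat \<phi> g l = 0"
  shows "nonid_cols (mmult (transvection w \<phi>) g) \<subseteq> nonid_cols g - {j}"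
proof
  fix l assume l: "l \<in> nonid_cols (mmult (transvection w \<phi>) g)"
  have tg: "mmult (transvection w \<phi>) g = (\<lambda>i l. g i l + w i * vec_mat \<phi> g l)"
    using assms(1) by (rule transvection_mmult)
  have "l \<noteq> j"
    using l assms(3) unfolding tg nonid_cols_def by (auto simp: assms(2))
  moreover have "l \<in> nonid_cols g"
    using l assms(4)[of l] unfolding tg nonid_cols_def by (cases "\<forall>i. g i l = idm i l") auto
  ultimately show "l \<in> nonid_cols g - {j}" by blast
qed

lemma transvection_factorization:
  assumes "finitary g" "finitary N" "mmult N g = idm"
  obtains ss where
    "\<forall>s\<in>set ss. \<exists>u p. s = transvection u p \<and> isotropic_pair u p \<and> u \<in> rng (msub g idm)"
    "mprod ss = g"
  using assms
proof (induction "card (nonid_cols g)" arbitrary: g N thesis rule: less_induct)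
  case less
  show ?case
  proof (cases "nonid_cols g = {}")
    case True
    then have "g = idm" by (auto simp: nonid_cols_def fun_eq_iff)
    then show ?thesis using less.prems(1)[of "[]"] by (simp add: mprod_def)
  next
    case False
    then obtain j where j: "j \<in> nonid_cols g" by blast
    define w where "w = (\<lambda>i. g i j - idm i j)"
    obtain \<phi> where \<phi>: "finsupp \<phi>" "supp \<phi> \<noteq> {}" "dot \<phi> w = 0" "vec_mat \<phi> g j = 1"
      "\<And>l. l \<notin> nonid_cols g \<Longrightarrow> vec_mat \<phi> g l = 0"
      using exists_clearing_covector[OF less.prems(2,4) j] unfolding w_def by blast
    define t where "t = transvection w \<phi>"
    have w: "finsupp w" "supp w \<noteq> {}" "w \<in> rng (msub g idm)"
      using finsupp_col_minus_idm[OF less.prems(2)] col_minus_idm_in_rng j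
      by (auto simp: w_def supp_def nonid_cols_def)
    have t: "finitary t" "mmult t t = idm" "isotropic_pair w \<phi>"
      using w \<phi> by (simp_all add: t_def transvection_involution isotropic_pair_def)
    have "nonid_cols (mmult t g) \<subset> nonid_cols g"
      using nonid_cols_transvection_mmult[OF \<phi>(1) w_def \<phi>(4,5)] j by (auto simp: t_def)
    then have fewer: "card (nonid_cols (mmult t g)) < card (nonid_cols g)"
      by (rule psubset_card_mono[OF finite_nonid_cols[OF less.prems(2)]])
    have "mmult (mmult N t) (mmult t g) = mmult N (mmult (mmult t t) g)"
      using less.prems(2,3) t(1) by (simp add: mmult_assoc del: t(2))
    then have inv: "mmult (mmult N t) (mmult t g) = idm"
      using less.prems(4) t(2) by simp
    obtain ss where
      ss: "\<forall>s\<in>set ss. \<exists>u p. s = transvection u p \<and> isotropic_pair u p \<and> u \<in> rng (msub (mmult t g) idm)"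
        "mprod ss = mmult t g"
      using less.hyps[OF fewer _ _ _ inv] less.prems(2,3) t(1) by auto
    have "rng (msub (mmult t g) idm) \<subseteq> rng (msub g idm)"
      unfolding t_def using \<phi>(1) w_def by (rule rng_transvection_mmult_subset)
    then have "\<forall>s\<in>set (t # ss). \<exists>u p. s = transvection u p \<and> isotropic_pair u p \<and> u \<in> rng (msub g idm)"
      using ss(1) t(3) w(3) unfolding t_def by fastforce
    moreover have "mprod (t # ss) = mmult (mmult t t) g"
      using ss(2) less.prems(2) t(1) by (simp add: mprod_def mmult_assoc del: t(2))
    then have "mprod (t # ss) = g"
      using t(2) by simp
    ultimately show ?thesis
      by (rule less.prems(1))
  qed
qed

theorem lemma4p5:
  assumes "g \<in> GLinf" and "g \<noteq> idm"
  shows "\<exists>ss :: mat list.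
           (\<forall>si \<in> set ss. si \<in> GLinf \<and> conjugate_GL si swap12)
         \<and> mprod ss = g
         \<and> ssum (map (\<lambda>si. rng (msub si idm)) ss) = rng (msub g idm)"
proof -
  obtain N where "finitary g" "finitary N" "mmult N g = idm"
    using assms(1) by (auto simp: GLinf_def)
  then obtain ss where ss:
    "\<forall>s\<in>set ss. \<exists>u p. s = transvection u p \<and> isotropic_pair u p \<and> u \<in> rng (msub g idm)"
    "mprod ss = g"
    by (rule transvection_factorization)
  have "\<forall>s\<in>set ss. s \<in> GLinf \<and> conjugate_GL s swap12"
    using ss(1) transvection_in_GLinf transvection_conjugate_swap12
    by (fastforce simp: isotropic_pair_def)
  moreover have "ssum (map (\<lambda>s. rng (msub s idm)) ss) \<subseteq> rng (msub g idm)"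
    using ss(1) rng_transvection_minus_idm zero_in_rng
    by (intro ssum_subset_rng) (fastforce simp: isotropic_pair_def)
  moreover have "rng (msub g idm) \<subseteq> ssum (map (\<lambda>s. rng (msub s idm)) ss)"
    using rng_mprod_subset_ssum[of ss] ss by (fastforce simp: isotropic_pair_def)
  ultimately show ?thesis
    using ss(2) by blast
qed

end
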